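(* Let $\alpha,\beta\in[0,1]$ and let $r=w_0\to w_1\to\dots\to w_m$ ($m\in\mathbb{N}\cup\{\infty\}$) be a directed path in $T$ starting at the root, where the decoupled process with parameters $(G,r,T,\alpha,\beta)$ is run. Consider independently the decoupled process with the same $\alpha,\beta$ on the path $\mathcal{P}_m$ with vertices $u_0\to u_1\to\dots\to u_m$, root $u_0$. Then for every $t>0$ and every $0\le j<j'\le m$, $$\Pr[\mathrm{origin}_t(w_j)=\mathrm{origin}_t(w_{j'})]=\Pr[\mathrm{origin}_t(u_j)=\mathrm{origin}_t(u_{j'})],$$ where the left probability refers to the process on $T$ and the right one to the process on $\mathcal{P}_m$.
   Context: Decoupled process. Fix $\alpha,\beta\in[0,1]$, a connected locally finite undirected graph $G$, root $r$, and a BFS spanning tree $T$ of $G$ rooted at $r$, oriented away from $r$, with parent map $p$. Let $Z_0=+1$, $Z_1,Z_2,\dots$ i.i.d. uniform on $\{-1,+1\}$, $Z_\infty=\bot$. Counter $\mathrm{count}_0=1$; $\mathrm{origin}_0(r)=0$, $\mathrm{origin}_0(v)=\infty$ for $v\ne r$; the root always has origin $0$; $g_t(v)=Z_{\mathrm{origin}_t(v)}$. Update from $t$ to $t+1$ (independent choices): if $g_t(v)=g_t(p(v))=\bot$ then $\mathrm{origin}_{t+1}(v)=\infty$; nodes with $g_t(v)=\bot\ne g_t(p(v))$ are processed sequentially in a fixed order: w.p. $1-\alpha$, $\mathrm{origin}_{t+1}(v)=\mathrm{origin}_t(p(v))$; w.p. $\alpha$, $\mathrm{origin}_{t+1}(v)$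 is the current counter value and the counter is then incremented; if $g_t(v)\neq\bot$, $v\ne r$: w.p. $\beta$, $\mathrm{origin}_{t+1}(v)=\mathrm{origin}_t(p(v))$, otherwise unchanged. For $n\in\mathbb{N}\cup\{\infty\}$, $\mathcal{P}_n$ denotes the path $u_0\to u_1\to\dots\to u_n$ rooted at $u_0$ (it is its own BFS tree). *)

theory Defs
  imports "HOL-Probability.Probability" "HOL-Library.Extended_Nat"
begin

definition conn_lf_graph :: "'v set \<Rightarrow> ('v \<Rightarrow> 'v \<Rightarrow> bool) \<Rightarrow> 'v \<Rightarrow> bool" where
  "conn_lf_graph V E r \<longleftrightarrow>
     r \<in> V \<and>
     (\<forall>u v. E u v \<longrightarrow> u \<in> V \<and> v \<in> V) \<and>
     (\<forall>u v. E u v \<longrightarrow> E v u) \<and>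
     (\<forall>v. \<not> E v v) \<and>
     (\<forall>v\<in>V. finite {u. E v u}) \<and>
     (\<forall>v\<in>V. E\<^sup>*\<^sup>* r v)"

(* p is the parent map of a BFS spanning tree of (V,E) rooted at r: there is a BFS discovery
   order sigma (an injective enumeration of V by naturals) such that r comes first, every
   non-root vertex is discovered after its parent, its parent is its sigma-least neighbour
   (the first dequeued neighbour), and children of earlier-dequeued vertices are discovered
   before children of later-dequeued vertices (FIFO queue discipline). *)
definition bfs_tree :: "'v set \<Rightarrow> ('v \<Rightarrow> 'v \<Rightarrow> bool) \<Rightarrow> 'v \<Rightarrow> ('v \<Rightarrow> 'v) \<Rightarrow> bool" where
  "bfs_tree V E r p \<longleftrightarrow>
     (\<exists>\<sigma> :: 'v \<Rightarrow> nat.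
        inj_on \<sigma> V \<and>
        (\<forall>v\<in>V. \<sigma> r \<le> \<sigma> v) \<and>
        (\<forall>v\<in>V. v \<noteq> r \<longrightarrow> p v \<in> V \<and> E v (p v) \<and> \<sigma> (p v) < \<sigma> v \<and>
                 (\<forall>u. E v u \<longrightarrow> \<sigma> (p v) \<le> \<sigma> u)) \<and>
        (\<forall>u\<in>V. \<forall>v\<in>V. u \<noteq> r \<longrightarrow> v \<noteq> r \<longrightarrow> \<sigma> (p u) < \<sigma> (p v) \<longrightarrow> \<sigma> u < \<sigma> v))"

(* A state: (origin map (None = \<infinity>), counter, values Z_k drawn so far).
   The i.i.d. signs Z_1, Z_2, ... are sampled lazily: Z_k is drawn (uniform on {-1,1}) at the
   moment the counter value k is first handed out; this gives the same joint law. *)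
type_synonym 'v dstate = "('v \<Rightarrow> nat option) \<times> nat \<times> (nat \<Rightarrow> int)"

definition gval :: "'v dstate \<Rightarrow> 'v \<Rightarrow> int option" where
  "gval s v = (case fst s v of None \<Rightarrow> None | Some k \<Rightarrow> Some (snd (snd s) k))"

definition dinit :: "'v \<Rightarrow> 'v dstate" where
  "dinit r = ((\<lambda>v. if v = r then Some 0 else None), 1, (\<lambda>k. if k = 0 then 1 else 0))"

(* one step t \<rightarrow> t+1; ord is the fixed order in which the nodes with
   g_t(v) = \<bottom> \<noteq> g_t(p v) are processed *)
definition dstep :: "real \<Rightarrow> real \<Rightarrow> 'v set \<Rightarrow> 'v \<Rightarrow> ('v \<Rightarrow> 'v) \<Rightarrow> ('v \<Rightarrow> nat)
                      \<Rightarrow> 'v dstate \<Rightarrow> 'v dstate pmf" where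
  "dstep \<alpha> \<beta> V r p ord s =
     (let org = fst s; c = fst (snd s); Z = snd (snd s);
          Cset = {v\<in>V. v \<noteq> r \<and> gval s v \<noteq> None};
          Bset = {v\<in>V. v \<noteq> r \<and> gval s v = None \<and> gval s (p v) \<noteq> None}
      in bind_pmf (Pi_pmf Cset False (\<lambda>_. bernoulli_pmf \<beta>)) (\<lambda>coins.
        let org1 = (\<lambda>v. if v = r then Some 0
                      else if v \<in> Cset then (if coins v then org (p v) else org v)
                      else None)
        in foldl (\<lambda>M v. bind_pmf M (\<lambda>(org', c', Z').
                  bind_pmf (bernoulli_pmf \<alpha>) (\<lambda>b.
                  if b then bind_pmf (pmf_of_set {-1, 1 :: int}) (\<lambda>z.
                     return_pmf (org'(v := Some c'), Suc c', Z'(c' := z)))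
                  else return_pmf (org'(v := org (p v)), c', Z'))))
              (return_pmf (org1, c, Z))
              (sorted_key_list_of_set ord Bset)))"

primrec dproc :: "real \<Rightarrow> real \<Rightarrow> 'v set \<Rightarrow> 'v \<Rightarrow> ('v \<Rightarrow> 'v) \<Rightarrow> ('v \<Rightarrow> nat)
                    \<Rightarrow> nat \<Rightarrow> 'v dstate pmf" where
  "dproc \<alpha> \<beta> V r p ord 0 = return_pmf (dinit r)"
| "dproc \<alpha> \<beta> V r p ord (Suc t) = bind_pmf (dproc \<alpha> \<beta> V r p ord t) (dstep \<alpha> \<beta> V r p ord)"

definition same_origin_prob :: "real \<Rightarrow> real \<Rightarrow> 'v set \<Rightarrow> 'v \<Rightarrow> ('v \<Rightarrow> 'v) \<Rightarrow> ('v \<Rightarrow> nat)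
                                  \<Rightarrow> nat \<Rightarrow> 'v \<Rightarrow> 'v \<Rightarrow> real" where
  "same_origin_prob \<alpha> \<beta> V r p ord t x y =
     measure_pmf.prob (dproc \<alpha> \<beta> V r p ord t) {s. fst s x = fst s y}"

(* The path P_m (m \<in> \<nat> \<union> {\<infinity>}) on vertices u_i = i, root 0, parent i \<mapsto> i - 1 *)
definition path_vertices :: "enat \<Rightarrow> nat set" where
  "path_vertices m = {i. enat i \<le> m}"

definition path_parent :: "nat \<Rightarrow> nat" where
  "path_parent i = i - 1"

end

theory Submission
  imports Defs
begin

text \<open>Along a root path \<open>w\<^sub>0 \<rightarrow> \<dots> \<rightarrow> w\<^sub>m\<close> the next origin of \<open>w\<^sub>i\<close> depends only on the
  current origins of \<open>w\<^sub>i\<close> and \<open>w\<^sub>i\<^sub>-\<^sub>1\<close> and on independent coins attached to \<open>w\<^sub>i\<close>, and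
  every newly handed out counter value differs from all origins in use. Hence the pair formed
  by the relation "same origin" on path indices and the set of path indices with origin \<open>\<infinity>\<close>
  is itself a Markov chain, whose kernel depends only on \<open>\<alpha>\<close>, \<open>\<beta>\<close> and \<open>m\<close>. The process on
  the path \<open>u\<^sub>0 \<rightarrow> \<dots> \<rightarrow> u\<^sub>m\<close>, read along the identity, yields the same chain.\<close>

definition assign_step :: "('v \<Rightarrow> nat option) \<Rightarrow> 'v dstate \<Rightarrow> 'v \<Rightarrow> bool \<times> int \<Rightarrow> 'v dstate" where
  "assign_step g s v bz = (case s of (org, c, Z) \<Rightarrow>
     if fst bz then (org(v := Some c), Suc c, Z(c := snd bz)) else (org(v := g v), c, Z))"

definition assign_fold ::
  "('v \<Rightarrow> nat option) \<Rightarrow> 'v list \<Rightarrow> ('v \<Rightarrow> bool \<times> int) \<Rightarrow> 'v dstate \<Rightarrow> 'v dstate" where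
  "assign_fold g vs x s = foldl (\<lambda>s v. assign_step g s v (x v)) s vs"

definition label_pmf :: "real \<Rightarrow> (bool \<times> int) pmf" where
  "label_pmf \<alpha> = pair_pmf (bernoulli_pmf \<alpha>) (pmf_of_set {-1, 1})"

lemma assign_fold_snoc: "assign_fold g (vs @ [v]) x s = assign_step g (assign_fold g vs x s) v (x v)"
  by (simp add: assign_fold_def)

lemma assign_fold_cong: "(\<And>v. v \<in> set vs \<Longrightarrow> x v = x' v) \<Longrightarrow> assign_fold g vs x s = assign_fold g vs x' s"
  unfolding assign_fold_def by (induction vs arbitrary: s) auto

text \<open>The coin and sign drawn node by node while \<^const>\<open>dstep\<close> processes the frontier may as
  well be drawn up front, one independent label per frontier node.\<close>
lemma foldl_assign_eq_map_Pi_pmf: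
  assumes "distinct vs"
  shows "foldl (\<lambda>M v. bind_pmf M (\<lambda>(org', c', Z'). bind_pmf (bernoulli_pmf \<alpha>) (\<lambda>b.
      if b then bind_pmf (pmf_of_set {-1, 1 :: int}) (\<lambda>z. return_pmf (org'(v := Some c'), Suc c', Z'(c' := z)))
      else return_pmf (org'(v := g v), c', Z')))) (return_pmf s) vs
    = map_pmf (\<lambda>x. assign_fold g vs x s) (Pi_pmf (set vs) (False, 0) (\<lambda>_. label_pmf \<alpha>))"
  using assms
proof (induction vs rule: rev_induct)
  case Nil
  then show ?case by (simp add: assign_fold_def)
next
  case (snoc v vs)
  let ?D = "label_pmf \<alpha>"
  let ?P = "Pi_pmf (set vs) (False, 0) (\<lambda>_. ?D)"
  have step: "(case s of (org', c', Z') \<Rightarrow> bind_pmf (bernoulli_pmf \<alpha>) (\<lambda>b.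
      if b then bind_pmf (pmf_of_set {-1, 1 :: int}) (\<lambda>z. return_pmf (org'(v := Some c'), Suc c', Z'(c' := z)))
      else return_pmf (org'(v := g v), c', Z'))) = map_pmf (assign_step g s v) ?D" for s
    by (cases s) (auto simp: label_pmf_def pair_pmf_def map_pmf_def bind_assoc_pmf bind_return_pmf
        assign_step_def intro!: bind_pmf_cong)
  have v_new: "v \<notin> set vs" using snoc by auto
  have "map_pmf (\<lambda>x. assign_fold g (vs @ [v]) x s) (Pi_pmf (set (vs @ [v])) (False, 0) (\<lambda>_. ?D))
      = map_pmf (\<lambda>x. assign_fold g (vs @ [v]) x s) (map_pmf (\<lambda>(a, f). f(v := a)) (pair_pmf ?D ?P))"
    by (simp add: Pi_pmf_insert v_new)
  also have "\<dots> = map_pmf (\<lambda>(a, f). assign_step g (assign_fold g vs f s) v a) (pair_pmf ?D ?P)"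
    unfolding pmf.map_comp
  proof (intro map_pmf_cong refl)
    fix af assume "af \<in> set_pmf (pair_pmf ?D ?P)"
    obtain a f where af: "af = (a, f)" by (cases af)
    have "assign_fold g vs (f(v := a)) s = assign_fold g vs f s"
      by (rule assign_fold_cong) (use v_new in auto)
    then show "((\<lambda>x. assign_fold g (vs @ [v]) x s) \<circ> (\<lambda>(a, f). f(v := a))) af
        = (\<lambda>(a, f). assign_step g (assign_fold g vs f s) v a) af"
      unfolding af by (simp add: assign_fold_snoc)
  qed
  also have "\<dots> = bind_pmf ?P (\<lambda>f. map_pmf (assign_step g (assign_fold g vs f s) v) ?D)"
    by (subst pair_commute_pmf) (simp add: pair_pmf_def map_pmf_def bind_assoc_pmf bind_return_pmf)
  finally show ?case using snoc
    by (simp add: step map_pmf_def bind_assoc_pmf bind_return_pmf cong: bind_pmf_cong)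
qed

lemma assign_fold_spec:
  assumes "distinct vs" "assign_fold g vs x (org, c, Z) = (org', c', Z')"
  shows "c \<le> c' \<and> (\<forall>v. v \<notin> set vs \<longrightarrow> org' v = org v)
    \<and> (\<forall>v\<in>set vs. \<not> fst (x v) \<longrightarrow> org' v = g v)
    \<and> (\<forall>v\<in>set vs. fst (x v) \<longrightarrow> (\<exists>k. org' v = Some k \<and> c \<le> k \<and> k < c'))
    \<and> (\<forall>u\<in>set vs. \<forall>v\<in>set vs. fst (x u) \<and> fst (x v) \<and> u \<noteq> v \<longrightarrow> org' u \<noteq> org' v)"
  using assms
proof (induction vs arbitrary: org' c' Z' rule: rev_induct)
  case Nil
  then show ?case by (simp add: assign_fold_def)
next
  case (snoc v vs)
  obtain org1 c1 Z1 where fold1: "assign_fold g vs x (org, c, Z) = (org1, c1, Z1)"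
    by (cases "assign_fold g vs x (org, c, Z)") auto
  have IH: "c \<le> c1 \<and> (\<forall>v. v \<notin> set vs \<longrightarrow> org1 v = org v)
    \<and> (\<forall>v\<in>set vs. \<not> fst (x v) \<longrightarrow> org1 v = g v)
    \<and> (\<forall>v\<in>set vs. fst (x v) \<longrightarrow> (\<exists>k. org1 v = Some k \<and> c \<le> k \<and> k < c1))
    \<and> (\<forall>u\<in>set vs. \<forall>v\<in>set vs. fst (x u) \<and> fst (x v) \<and> u \<noteq> v \<longrightarrow> org1 u \<noteq> org1 v)"
    using snoc.IH[OF _ fold1] snoc.prems by auto
  have v_new: "v \<notin> set vs" using snoc.prems by auto
  have last: "assign_step g (org1, c1, Z1) v (x v) = (org', c', Z')"
    using snoc.prems(2) fold1 by (simp add: assign_fold_snoc)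
  show ?case
  proof (cases "fst (x v)")
    case True
    then have "org' = org1(v := Some c1)" "c' = Suc c1" using last by (auto simp: assign_step_def)
    then show ?thesis using IH v_new True by (auto 0 3 simp: Ball_def)
  next
    case False
    then have "org' = org1(v := g v)" "c' = c1" using last by (auto simp: assign_step_def)
    then show ?thesis using IH v_new False by (auto simp: Ball_def)
  qed
qed

lemma map_Pi_pmf_reindex_image:
  assumes "finite I" "inj_on w I"
  shows "map_pmf (\<lambda>g i. if i \<in> I then g (w i) else d) (Pi_pmf (w ` I) d (\<lambda>_. D)) = Pi_pmf I d (\<lambda>_. D)"
  using assms
proof (induction I rule: finite_induct)
  case empty
  then show ?case by simp
next
  case (insert a I)
  let ?restr = "\<lambda>g i. if i \<in> I then g (w i) else d"
  have wa: "w a \<notin> w ` I" and inj: "inj_on w I" and fin: "finite (w ` I)" using insert by auto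
  have "map_pmf (\<lambda>g i. if i \<in> insert a I then g (w i) else d) (Pi_pmf (w ` insert a I) d (\<lambda>_. D))
      = map_pmf (\<lambda>g i. if i \<in> insert a I then g (w i) else d)
          (map_pmf (\<lambda>(y, g). g(w a := y)) (pair_pmf D (Pi_pmf (w ` I) d (\<lambda>_. D))))"
    by (simp only: image_insert Pi_pmf_insert[OF fin wa])
  also have "\<dots> = map_pmf (\<lambda>(y, h). h(a := y)) (map_pmf (\<lambda>(y, g). (y, ?restr g)) (pair_pmf D (Pi_pmf (w ` I) d (\<lambda>_. D))))"
    unfolding pmf.map_comp
  proof (intro map_pmf_cong refl)
    fix yg assume "yg \<in> set_pmf (pair_pmf D (Pi_pmf (w ` I) d (\<lambda>_. D)))"
    obtain y g where yg: "yg = (y, g)" by (cases yg)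
    have "(\<lambda>i. if i \<in> insert a I then (g(w a := y)) (w i) else d) = (?restr g)(a := y)"
      using insert.prems insert.hyps by (auto simp: inj_on_def fun_eq_iff)
    then show "((\<lambda>g i. if i \<in> insert a I then g (w i) else d) \<circ> (\<lambda>(y, g). g(w a := y))) yg =
        ((\<lambda>(y, h). h(a := y)) \<circ> (\<lambda>(y, g). (y, ?restr g))) yg"
      unfolding yg comp_def prod.case .
  qed
  also have "\<dots> = map_pmf (\<lambda>(y, h). h(a := y)) (pair_pmf D (Pi_pmf I d (\<lambda>_. D)))"
    using map_pair[of "\<lambda>y. y" ?restr D "Pi_pmf (w ` I) d (\<lambda>_. D)"] insert.IH[OF inj] by simp
  also have "\<dots> = Pi_pmf (insert a I) d (\<lambda>_. D)"
    by (simp only: Pi_pmf_insert[OF insert.hyps(1,2)])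
  finally show ?case .
qed

lemma map_Pi_pmf_reindex:
  assumes "finite I" "inj_on w I" "w ` I \<subseteq> A" "finite A"
  shows "map_pmf (\<lambda>g i. if i \<in> I then g (w i) else d) (Pi_pmf A d (\<lambda>_. D)) = Pi_pmf I d (\<lambda>_. D)"
proof -
  have "Pi_pmf I d (\<lambda>_. D) = map_pmf (\<lambda>g i. if i \<in> I then g (w i) else d) (Pi_pmf (w ` I) d (\<lambda>_. D))"
    using map_Pi_pmf_reindex_image[OF assms(1,2)] by metis
  also have "\<dots> = map_pmf (\<lambda>g i. if i \<in> I then g (w i) else d)
      (map_pmf (\<lambda>f x. if x \<in> w ` I then f x else d) (Pi_pmf A d (\<lambda>_. D)))"
    by (subst Pi_pmf_subset[OF assms(4,3)]) simp
  also have "\<dots> = map_pmf (\<lambda>g i. if i \<in> I then g (w i) else d) (Pi_pmf A d (\<lambda>_. D))"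
    unfolding pmf.map_comp by (intro map_pmf_cong refl) (auto simp: fun_eq_iff)
  finally show ?thesis by simp
qed

lemma enat_diff_le: "enat i \<le> m \<Longrightarrow> enat (i - k) \<le> m"
  by (erule order_trans[rotated]) simp

context linorder
begin

lemma sorted_key_list_of_set_inj_on:
  assumes "inj_on f S" "A \<subseteq> S" "finite A"
  shows "set (sorted_key_list_of_set f A) = A" "distinct (sorted_key_list_of_set f A)"
proof -
  interpret folding_insort_key "(\<le>)" "(<)" S f by unfold_locales (rule assms(1))
  show "set (sorted_key_list_of_set f A) = A"
    using assms(2,3) by simp
  show "distinct (sorted_key_list_of_set f A)"
    using distinct_sorted_key_list_of_set[OF assms(2)] distinct_map by blast
qed

end

locale decoupled_process =
  fixes \<alpha> \<beta> :: real and V :: "'v set" and r :: 'v and p :: "'v \<Rightarrow> 'v" and ord :: "'v \<Rightarrow> nat"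
  assumes ord_inj: "inj_on ord V"
    and finite_children: "\<And>u. finite {v\<in>V. v \<noteq> r \<and> p v = u}"
begin

definition active_nodes :: "'v dstate \<Rightarrow> 'v set" where
  "active_nodes s = {v\<in>V. v \<noteq> r \<and> fst s v \<noteq> None}"

definition frontier_nodes :: "'v dstate \<Rightarrow> 'v set" where
  "frontier_nodes s = {v\<in>V. v \<noteq> r \<and> fst s v = None \<and> fst s (p v) \<noteq> None}"

definition copied_origins :: "'v dstate \<Rightarrow> ('v \<Rightarrow> bool) \<Rightarrow> 'v \<Rightarrow> nat option" where
  "copied_origins s coins = (\<lambda>v. if v = r then Some 0
     else if v \<in> active_nodes s then (if coins v then fst s (p v) else fst s v) else None)"

definition frontier_list :: "'v dstate \<Rightarrow> 'v list" where
  "frontier_list s = sorted_key_list_of_set ord (frontier_nodes s)"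

definition step_result :: "'v dstate \<Rightarrow> ('v \<Rightarrow> bool) \<times> ('v \<Rightarrow> bool \<times> int) \<Rightarrow> 'v dstate" where
  "step_result s cx = assign_fold (\<lambda>v. fst s (p v)) (frontier_list s) (snd cx)
      (copied_origins s (fst cx), fst (snd s), snd (snd s))"

definition wf_state :: "'v dstate \<Rightarrow> bool" where
  "wf_state s \<longleftrightarrow> fst s r = Some 0 \<and> (\<forall>v k. fst s v = Some k \<longrightarrow> k < fst (snd s))
     \<and> finite {v. fst s v \<noteq> None}"

lemma finite_frontier_nodes:
  assumes "wf_state s"
  shows "finite (frontier_nodes s)"
proof (rule finite_subset)
  show "frontier_nodes s \<subseteq> (\<Union>u\<in>{v. fst s v \<noteq> None}. {v\<in>V. v \<noteq> r \<and> p v = u})"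
    by (auto simp: frontier_nodes_def)
  show "finite (\<Union>u\<in>{v. fst s v \<noteq> None}. {v\<in>V. v \<noteq> r \<and> p v = u})"
    using assms finite_children by (auto simp: wf_state_def)
qed

lemma set_frontier_list: "wf_state s \<Longrightarrow> set (frontier_list s) = frontier_nodes s"
  and distinct_frontier_list: "wf_state s \<Longrightarrow> distinct (frontier_list s)"
  using sorted_key_list_of_set_inj_on[OF ord_inj, of "frontier_nodes s"] finite_frontier_nodes[of s]
  by (auto simp: frontier_list_def frontier_nodes_def)

lemma finite_active_nodes: "wf_state s \<Longrightarrow> finite (active_nodes s)"
  by (rule finite_subset[of _ "{v. fst s v \<noteq> None}"]) (auto simp: active_nodes_def wf_state_def)

lemma dstep_eq_map_step_result:
  assumes "wf_state s"
  shows "dstep \<alpha> \<beta> V r p ord s = map_pmf (step_result s)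
     (pair_pmf (Pi_pmf (active_nodes s) False (\<lambda>_. bernoulli_pmf \<beta>))
        (Pi_pmf (frontier_nodes s) (False, 0) (\<lambda>_. label_pmf \<alpha>)))"
proof -
  have gval: "gval s v = None \<longleftrightarrow> fst s v = None" for v
    by (simp add: gval_def split: option.split)
  show ?thesis
    unfolding dstep_def Let_def gval active_nodes_def[symmetric] frontier_nodes_def[symmetric]
      frontier_list_def[symmetric]
    by (simp only: foldl_assign_eq_map_Pi_pmf[OF distinct_frontier_list[OF assms]] set_frontier_list[OF assms])
      (simp add: pair_pmf_def map_pmf_def bind_assoc_pmf bind_return_pmf step_result_def
        copied_origins_def label_pmf_def; simp only: fst_conv)
qed

lemma step_result_origin:
  assumes "wf_state s" and "step_result s (coins, x) = (org', c', Z')"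
  shows "fst (snd s) \<le> c'"
    and "\<And>v. v \<notin> frontier_nodes s \<Longrightarrow> org' v = copied_origins s coins v"
    and "\<And>v. v \<in> frontier_nodes s \<Longrightarrow> \<not> fst (x v) \<Longrightarrow> org' v = fst s (p v)"
    and "\<And>v. v \<in> frontier_nodes s \<Longrightarrow> fst (x v) \<Longrightarrow> \<exists>k. org' v = Some k \<and> fst (snd s) \<le> k \<and> k < c'"
    and "\<And>u v. u \<in> frontier_nodes s \<Longrightarrow> v \<in> frontier_nodes s \<Longrightarrow> fst (x u) \<Longrightarrow> fst (x v) \<Longrightarrow> u \<noteq> v
           \<Longrightarrow> org' u \<noteq> org' v"
  using assign_fold_spec[OF distinct_frontier_list[OF assms(1)]
      assms(2)[unfolded step_result_def snd_conv fst_conv]]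
  unfolding set_frontier_list[OF assms(1)] by simp_all

lemma wf_state_step_result:
  assumes wf: "wf_state s"
  shows "wf_state (step_result s (coins, x))"
proof -
  obtain org' c' Z' where res: "step_result s (coins, x) = (org', c', Z')"
    by (cases "step_result s (coins, x)") auto
  note origin = step_result_origin[OF wf res]
  have labels: "\<And>v k. fst s v = Some k \<Longrightarrow> k < fst (snd s)" and root: "fst s r = Some 0"
    using wf by (auto simp: wf_state_def)
  have r_frontier: "r \<notin> frontier_nodes s" by (simp add: frontier_nodes_def)
  have "org' r = Some 0" using origin(2)[OF r_frontier] by (simp add: copied_origins_def)
  moreover have "k < c'" if "org' v = Some k" for v k
  proof (cases "v \<in> frontier_nodes s")
    case True
    then show ?thesis using origin(1,3,4) that labels by (cases "fst (x v)") fastforce+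
  next
    case False
    then have "org' v = Some 0 \<or> org' v = fst s (p v) \<or> org' v = fst s v"
      using origin(2) that by (auto simp: copied_origins_def split: if_splits)
    then show ?thesis using that labels root origin(1) by fastforce
  qed
  moreover have "{v. org' v \<noteq> None} \<subseteq> insert r (frontier_nodes s \<union> {v. fst s v \<noteq> None})"
  proof
    fix v assume "v \<in> {v. org' v \<noteq> None}"
    then show "v \<in> insert r (frontier_nodes s \<union> {v. fst s v \<noteq> None})"
      using origin(2)[of v] by (cases "v \<in> frontier_nodes s")
        (auto simp: copied_origins_def active_nodes_def split: if_splits)
  qed
  then have "finite {v. org' v \<noteq> None}"
    by (rule finite_subset) (use finite_frontier_nodes[OF wf] wf in \<open>simp add: wf_state_def\<close>)
  ultimately show ?thesis by (simp add: res wf_state_def)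
qed

lemma wf_state_dproc: "s \<in> set_pmf (dproc \<alpha> \<beta> V r p ord t) \<Longrightarrow> wf_state s"
proof (induction t arbitrary: s)
  case 0
  then show ?case by (simp add: dinit_def wf_state_def)
next
  case (Suc t)
  then obtain s0 where s0: "s0 \<in> set_pmf (dproc \<alpha> \<beta> V r p ord t)" "s \<in> set_pmf (dstep \<alpha> \<beta> V r p ord s0)"
    by auto
  have wf: "wf_state s0" using Suc.IH[OF s0(1)] .
  then obtain coins x where "s = step_result s0 (coins, x)"
    using s0(2) by (auto simp: dstep_eq_map_step_result)
  then show ?case using wf_state_step_result[OF wf] by simp
qed

end

type_synonym path_view = "(nat \<Rightarrow> nat \<Rightarrow> bool) \<times> (nat \<Rightarrow> bool)"

definition path_view :: "(nat \<Rightarrow> 'v) \<Rightarrow> enat \<Rightarrow> ('v \<Rightarrow> nat option) \<Rightarrow> path_view" where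
  "path_view w m org = ((\<lambda>i k. enat i \<le> m \<and> enat k \<le> m \<and> org (w i) = org (w k)),
     (\<lambda>i. enat i \<le> m \<and> org (w i) = None))"

text \<open>The next origin of a path vertex relative to the current state: \<open>Old j\<close> is the current
  origin of \<open>w\<^sub>j\<close>, \<open>Fresh i\<close> the counter value handed out to \<open>w\<^sub>i\<close> in this step.\<close>

datatype sym_origin = Undef | Old nat | Fresh nat

fun sym_eq :: "path_view \<Rightarrow> sym_origin \<Rightarrow> sym_origin \<Rightarrow> bool" where
  "sym_eq a Undef Undef = True"
| "sym_eq a Undef (Old j) = snd a j"
| "sym_eq a (Old j) Undef = snd a j"
| "sym_eq a (Old j) (Old k) = fst a j k"
| "sym_eq a (Fresh l) (Fresh l') = (l = l')"
| "sym_eq a _ _ = False"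

definition realizes :: "(nat \<Rightarrow> 'v) \<Rightarrow> enat \<Rightarrow> ('v \<Rightarrow> nat option) \<Rightarrow> nat \<Rightarrow> sym_origin \<Rightarrow> nat option \<Rightarrow> bool"
  where
  "realizes w m org c a lbl \<longleftrightarrow> (case a of
     Undef \<Rightarrow> lbl = None
   | Old j \<Rightarrow> enat j \<le> m \<and> lbl = org (w j)
   | Fresh l \<Rightarrow> (\<exists>k. lbl = Some k \<and> c \<le> k))"

lemma sym_eq_iff_realized:
  assumes "realizes w m org c a la" "realizes w m org c b lb"
    and "\<And>l l'. a = Fresh l \<Longrightarrow> b = Fresh l' \<Longrightarrow> la = lb \<longleftrightarrow> l = l'"
    and "\<And>v k. org v = Some k \<Longrightarrow> k < c"
  shows "la = lb \<longleftrightarrow> sym_eq (path_view w m org) a b"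
proof (cases a; cases b)
  fix l j assume "a = Fresh l" "b = Old j"
  then obtain k where "la = Some k" "c \<le> k" "lb = org (w j)"
    using assms(1,2) by (auto simp: realizes_def)
  then have "la \<noteq> lb" using assms(4)[of "w j" k] by auto
  then show ?thesis using \<open>a = Fresh l\<close> \<open>b = Old j\<close> by simp
next
  fix l j assume "a = Old j" "b = Fresh l"
  then obtain k where "lb = Some k" "c \<le> k" "la = org (w j)"
    using assms(1,2) by (auto simp: realizes_def)
  then have "la \<noteq> lb" using assms(4)[of "w j" k] by auto
  then show ?thesis using \<open>a = Old j\<close> \<open>b = Fresh l\<close> by simp
next
  fix l l' assume "a = Fresh l" "b = Fresh l'"
  then show ?thesis using assms(3) by simp
qed (use assms(1,2) in \<open>auto simp: realizes_def path_view_def\<close>)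

definition next_sym_origin :: "(nat \<Rightarrow> bool) \<Rightarrow> (nat \<Rightarrow> bool) \<Rightarrow> (nat \<Rightarrow> bool) \<Rightarrow> nat \<Rightarrow> sym_origin" where
  "next_sym_origin undef copy fresh i =
     (if i = 0 then Old 0
      else if \<not> undef i then (if copy i then Old (i - 1) else Old i)
      else if \<not> undef (i - 1) then (if fresh i then Fresh i else Old (i - 1))
      else Undef)"

lemma next_sym_origin_Fresh: "next_sym_origin undef copy fresh i = Fresh l \<Longrightarrow> l = i \<and> fresh i"
  by (auto simp: next_sym_origin_def split: if_splits)

definition view_update :: "enat \<Rightarrow> path_view \<Rightarrow> (nat \<Rightarrow> bool) \<times> (nat \<Rightarrow> bool) \<Rightarrow> path_view" where
  "view_update m a cf =
     ((\<lambda>i k. enat i \<le> m \<and> enat k \<le> m \<and>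
        sym_eq a (next_sym_origin (snd a) (fst cf) (snd cf) i) (next_sym_origin (snd a) (fst cf) (snd cf) k)),
      (\<lambda>i. enat i \<le> m \<and> sym_eq a (next_sym_origin (snd a) (fst cf) (snd cf) i) Undef))"

definition active_indices :: "enat \<Rightarrow> (nat \<Rightarrow> bool) \<Rightarrow> nat set" where
  "active_indices m undef = {i. enat i \<le> m \<and> i \<noteq> 0 \<and> \<not> undef i}"

definition frontier_indices :: "enat \<Rightarrow> (nat \<Rightarrow> bool) \<Rightarrow> nat set" where
  "frontier_indices m undef = {i. enat i \<le> m \<and> i \<noteq> 0 \<and> undef i \<and> \<not> undef (i - 1)}"

definition view_kernel :: "real \<Rightarrow> real \<Rightarrow> enat \<Rightarrow> path_view \<Rightarrow> path_view pmf" where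
  "view_kernel \<alpha> \<beta> m a = map_pmf (view_update m a)
     (pair_pmf (Pi_pmf (active_indices m (snd a)) False (\<lambda>_. bernoulli_pmf \<beta>))
        (Pi_pmf (frontier_indices m (snd a)) False (\<lambda>_. bernoulli_pmf \<alpha>)))"

definition initial_view :: "enat \<Rightarrow> path_view" where
  "initial_view m = ((\<lambda>i k. enat i \<le> m \<and> enat k \<le> m \<and> (i = 0 \<longleftrightarrow> k = 0)), (\<lambda>i. enat i \<le> m \<and> i \<noteq> 0))"

primrec view_chain :: "real \<Rightarrow> real \<Rightarrow> enat \<Rightarrow> nat \<Rightarrow> path_view pmf" where
  "view_chain \<alpha> \<beta> m 0 = return_pmf (initial_view m)"
| "view_chain \<alpha> \<beta> m (Suc t) = bind_pmf (view_chain \<alpha> \<beta> m t) (view_kernel \<alpha> \<beta> m)"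

locale root_path = decoupled_process \<alpha> \<beta> V r p ord
  for \<alpha> \<beta> :: real and V :: "'v set" and r :: 'v and p ord +
  fixes m :: enat and w :: "nat \<Rightarrow> 'v"
  assumes path_root: "w 0 = r"
    and path_edge: "\<And>i. 1 \<le> i \<Longrightarrow> enat i \<le> m \<Longrightarrow> w i \<in> V \<and> w i \<noteq> r \<and> p (w i) = w (i - 1)"
begin

abbreviation view :: "'v dstate \<Rightarrow> path_view" where
  "view s \<equiv> path_view w m (fst s)"

lemma path_ancestor: "enat i \<le> m \<Longrightarrow> n \<le> i \<Longrightarrow> (p ^^ n) (w i) = w (i - n)"
proof (induction n)
  case (Suc n)
  then have "(p ^^ Suc n) (w i) = p (w (i - n))" by simp
  also have "\<dots> = w (i - Suc n)" using path_edge[of "i - n"] enat_diff_le Suc.prems by simp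
  finally show ?case .
qed simp

lemma inj_on_path: "inj_on w {i. enat i \<le> m}"
proof -
  have False if "i < k" "enat k \<le> m" "w i = w k" for i k
  proof -
    have "enat i \<le> m" using that(1,2) by (metis enat_ord_simps(1) less_imp_le order_trans)
    have "w (k - i) = (p ^^ i) (w k)" using path_ancestor[of k i] that by simp
    also have "\<dots> = (p ^^ i) (w i)" using that by simp
    also have "\<dots> = r" using path_ancestor[of i i] \<open>enat i \<le> m\<close> path_root by simp
    finally show False using path_edge[of "k - i"] that enat_diff_le by auto
  qed
  then show ?thesis
    unfolding inj_on_def by (metis linorder_neqE_nat mem_Collect_eq)
qed

definition path_coins :: "'v dstate \<Rightarrow> ('v \<Rightarrow> bool) \<Rightarrow> nat \<Rightarrow> bool" where
  "path_coins s coins i = (if i \<in> active_indices m (snd (view s)) then coins (w i) else False)"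

definition path_flags :: "'v dstate \<Rightarrow> ('v \<Rightarrow> bool \<times> int) \<Rightarrow> nat \<Rightarrow> bool" where
  "path_flags s x i = (if i \<in> frontier_indices m (snd (view s)) then fst (x (w i)) else False)"

lemma active_index_node: "i \<in> active_indices m (snd (view s)) \<Longrightarrow> w i \<in> active_nodes s"
  using path_edge[of i] by (auto simp: active_indices_def active_nodes_def path_view_def)

lemma frontier_index_node: "i \<in> frontier_indices m (snd (view s)) \<Longrightarrow> w i \<in> frontier_nodes s"
  using path_edge[of i] enat_diff_le[of i m 1]
  by (auto simp: frontier_indices_def frontier_nodes_def path_view_def)

lemma step_result_realizes:
  assumes wf: "wf_state s" and res: "step_result s (coins, x) = (org', c', Z')" and i: "enat i \<le> m"
  shows "realizes w m (fst s) (fst (snd s))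
           (next_sym_origin (snd (view s)) (path_coins s coins) (path_flags s x) i) (org' (w i))"
proof (cases "i = 0")
  case True
  have "org' r = Some 0"
    using step_result_origin(2)[OF wf res, of r] by (simp add: frontier_nodes_def copied_origins_def)
  then show ?thesis
    using True i path_root wf by (simp add: realizes_def next_sym_origin_def wf_state_def)
next
  case False
  have wi: "w i \<in> V" "w i \<noteq> r" "p (w i) = w (i - 1)" using path_edge[of i] False i by auto
  have i1: "enat (i - 1) \<le> m" using enat_diff_le[OF i] .
  note origin = step_result_origin[OF wf res]
  consider (active) "fst s (w i) \<noteq> None"
    | (frontier) "fst s (w i) = None" "fst s (w (i - 1)) \<noteq> None"
    | (dead) "fst s (w i) = None" "fst s (w (i - 1)) = None"
    by blast
  then show ?thesis
  proof cases
    case active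
    have "i \<in> active_indices m (snd (view s))"
      using active False i by (simp add: active_indices_def path_view_def)
    moreover have "w i \<notin> frontier_nodes s" using active by (simp add: frontier_nodes_def)
    ultimately show ?thesis
      using origin(2) active_index_node wi False i i1 active
      by (simp add: realizes_def next_sym_origin_def path_coins_def path_view_def copied_origins_def)
  next
    case frontier
    have idx: "i \<in> frontier_indices m (snd (view s))"
      using frontier False i i1 by (simp add: frontier_indices_def path_view_def)
    note node = frontier_index_node[OF idx]
    show ?thesis
      using origin(3,4)[OF node] wi idx frontier False i i1
      by (cases "fst (x (w i))") (auto simp: realizes_def next_sym_origin_def path_flags_def path_view_def)
  next
    case dead
    have "w i \<notin> frontier_nodes s" "w i \<notin> active_nodes s"
      using dead wi by (simp_all add: frontier_nodes_def active_nodes_def)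
    then show ?thesis using origin(2) dead wi False i i1
      by (simp add: realizes_def next_sym_origin_def path_view_def copied_origins_def)
  qed
qed

lemma view_step_result:
  assumes wf: "wf_state s"
  shows "view (step_result s (coins, x)) = view_update m (view s) (path_coins s coins, path_flags s x)"
proof -
  obtain org' c' Z' where res: "step_result s (coins, x) = (org', c', Z')"
    by (cases "step_result s (coins, x)") auto
  define sv where "sv = next_sym_origin (snd (view s)) (path_coins s coins) (path_flags s x)"
  have labels: "\<And>v k. fst s v = Some k \<Longrightarrow> k < fst (snd s)" using wf by (auto simp: wf_state_def)
  have real: "realizes w m (fst s) (fst (snd s)) (sv i) (org' (w i))" if "enat i \<le> m" for i
    using step_result_realizes[OF wf res that] by (simp add: sv_def)
  have fresh: "org' (w i) = org' (w k) \<longleftrightarrow> l = l'"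
    if "enat i \<le> m" "enat k \<le> m" "sv i = Fresh l" "sv k = Fresh l'" for i k l l'
  proof -
    have "l = i" "path_flags s x i" "l' = k" "path_flags s x k"
      using next_sym_origin_Fresh[OF that(3)[unfolded sv_def]]
        next_sym_origin_Fresh[OF that(4)[unfolded sv_def]] by auto
    then have "w i \<in> frontier_nodes s" "fst (x (w i))" "w k \<in> frontier_nodes s" "fst (x (w k))"
      using frontier_index_node by (auto simp: path_flags_def split: if_splits)
    moreover have "i \<noteq> k \<Longrightarrow> w i \<noteq> w k" using inj_on_path that(1,2) by (auto simp: inj_on_def)
    ultimately show ?thesis using step_result_origin(5)[OF wf res] \<open>l = i\<close> \<open>l' = k\<close> by auto
  qed
  have same: "org' (w i) = org' (w k) \<longleftrightarrow> sym_eq (view s) (sv i) (sv k)"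
    if "enat i \<le> m" "enat k \<le> m" for i k
    by (rule sym_eq_iff_realized[OF real[OF that(1)] real[OF that(2)] fresh[OF that] labels])
  have undef: "org' (w i) = None \<longleftrightarrow> sym_eq (view s) (sv i) Undef" if "enat i \<le> m" for i
    by (rule sym_eq_iff_realized[OF real[OF that] _ _ labels]) (simp_all add: realizes_def)
  have "(\<lambda>i k. enat i \<le> m \<and> enat k \<le> m \<and> org' (w i) = org' (w k))
      = (\<lambda>i k. enat i \<le> m \<and> enat k \<le> m \<and> sym_eq (view s) (sv i) (sv k))"
    using same by (auto simp: fun_eq_iff)
  moreover have "(\<lambda>i. enat i \<le> m \<and> org' (w i) = None) = (\<lambda>i. enat i \<le> m \<and> sym_eq (view s) (sv i) Undef)"
    using undef by (auto simp: fun_eq_iff)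
  ultimately show ?thesis by (simp add: res path_view_def view_update_def sv_def)
qed

lemma map_path_coins_Pi_pmf:
  assumes wf: "wf_state s"
  shows "map_pmf (path_coins s) (Pi_pmf (active_nodes s) False (\<lambda>_. bernoulli_pmf \<beta>))
    = Pi_pmf (active_indices m (snd (view s))) False (\<lambda>_. bernoulli_pmf \<beta>)"
proof -
  let ?A = "active_indices m (snd (view s))"
  have inj: "inj_on w ?A" by (rule inj_on_subset[OF inj_on_path]) (auto simp: active_indices_def)
  have sub: "w ` ?A \<subseteq> active_nodes s" using active_index_node by blast
  note fin = finite_active_nodes[OF wf]
  show ?thesis
    unfolding path_coins_def
    by (rule map_Pi_pmf_reindex[OF finite_imageD[OF finite_subset[OF sub fin] inj] inj sub fin])
qed

lemma map_path_flags_Pi_pmf: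
  assumes wf: "wf_state s"
  shows "map_pmf (path_flags s) (Pi_pmf (frontier_nodes s) (False, 0) (\<lambda>_. label_pmf \<alpha>))
    = Pi_pmf (frontier_indices m (snd (view s))) False (\<lambda>_. bernoulli_pmf \<alpha>)"
proof -
  let ?F = "frontier_indices m (snd (view s))"
  let ?L = "Pi_pmf (frontier_nodes s) (False, 0) (\<lambda>_. label_pmf \<alpha>)"
  have inj: "inj_on w ?F" by (rule inj_on_subset[OF inj_on_path]) (auto simp: frontier_indices_def)
  have sub: "w ` ?F \<subseteq> frontier_nodes s" using frontier_index_node by blast
  note fin = finite_frontier_nodes[OF wf]
  have fin_idx: "finite ?F" using finite_imageD[OF finite_subset[OF sub fin] inj] .
  have "map_pmf (path_flags s) ?L
      = map_pmf (\<lambda>h. fst \<circ> h) (map_pmf (\<lambda>g i. if i \<in> ?F then g (w i) else (False, 0)) ?L)"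
    unfolding pmf.map_comp by (intro map_pmf_cong refl) (auto simp: path_flags_def fun_eq_iff)
  also have "\<dots> = map_pmf (\<lambda>h. fst \<circ> h) (Pi_pmf ?F (False, 0) (\<lambda>_. label_pmf \<alpha>))"
    by (simp only: map_Pi_pmf_reindex[OF fin_idx inj sub fin])
  also have "\<dots> = Pi_pmf ?F False (\<lambda>_. bernoulli_pmf \<alpha>)"
    using Pi_pmf_map[OF fin_idx, of fst "(False, 0)" False "\<lambda>_. label_pmf \<alpha>"]
    by (simp add: label_pmf_def map_fst_pair_pmf)
  finally show ?thesis .
qed

lemma map_view_dstep:
  assumes wf: "wf_state s"
  shows "map_pmf (\<lambda>s. view s) (dstep \<alpha> \<beta> V r p ord s) = view_kernel \<alpha> \<beta> m (view s)"
proof -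
  let ?C = "Pi_pmf (active_nodes s) False (\<lambda>_. bernoulli_pmf \<beta>)"
  let ?L = "Pi_pmf (frontier_nodes s) (False, 0) (\<lambda>_. label_pmf \<alpha>)"
  have "map_pmf (\<lambda>s. view s) (dstep \<alpha> \<beta> V r p ord s)
      = map_pmf (\<lambda>(coins, x). view_update m (view s) (path_coins s coins, path_flags s x)) (pair_pmf ?C ?L)"
    unfolding dstep_eq_map_step_result[OF wf] pmf.map_comp
    by (intro map_pmf_cong refl) (auto simp: view_step_result[OF wf])
  also have "\<dots> = map_pmf (view_update m (view s)) (pair_pmf (map_pmf (path_coins s) ?C) (map_pmf (path_flags s) ?L))"
    by (simp add: map_pair[symmetric] pmf.map_comp case_prod_unfold o_def)
  finally show ?thesis
    by (simp add: view_kernel_def map_path_coins_Pi_pmf[OF wf] map_path_flags_Pi_pmf[OF wf])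
qed

lemma view_dproc: "map_pmf (\<lambda>s. view s) (dproc \<alpha> \<beta> V r p ord t) = view_chain \<alpha> \<beta> m t"
proof (induction t)
  case 0
  have "w i = r \<longleftrightarrow> i = 0" if "enat i \<le> m" for i
    using path_edge[of i] path_root that by (cases "i = 0") auto
  then have "view (dinit r) = initial_view m"
    by (auto simp: path_view_def initial_view_def dinit_def fun_eq_iff)
  then show ?case by simp
next
  case (Suc t)
  have "map_pmf (\<lambda>s. view s) (dproc \<alpha> \<beta> V r p ord (Suc t))
      = bind_pmf (dproc \<alpha> \<beta> V r p ord t) (\<lambda>s. view_kernel \<alpha> \<beta> m (view s))"
    by (simp add: map_bind_pmf map_view_dstep wf_state_dproc cong: bind_pmf_cong)
  also have "\<dots> = bind_pmf (map_pmf (\<lambda>s. view s) (dproc \<alpha> \<beta> V r p ord t)) (view_kernel \<alpha> \<beta> m)"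
    by (simp add: bind_map_pmf)
  finally show ?case using Suc by simp
qed

lemma same_origin_prob_eq_view_chain:
  assumes "enat j \<le> m" "enat j' \<le> m"
  shows "same_origin_prob \<alpha> \<beta> V r p ord t (w j) (w j') = measure_pmf.prob (view_chain \<alpha> \<beta> m t) {a. fst a j j'}"
proof -
  have "{s. fst s (w j) = fst s (w j')} = (\<lambda>s. view s) -` {a. fst a j j'}"
    using assms by (auto simp: path_view_def)
  then show ?thesis
    unfolding same_origin_prob_def view_dproc[symmetric] measure_map_pmf by simp
qed

end

lemma bfs_tree_finite_children:
  assumes "conn_lf_graph V E r" "bfs_tree V E r p"
  shows "finite {v\<in>V. v \<noteq> r \<and> p v = u}"
proof (cases "u \<in> V")
  case True
  have "\<forall>v\<in>V. v \<noteq> r \<longrightarrow> E v (p v)" using assms(2) by (auto simp: bfs_tree_def)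
  then have "{v\<in>V. v \<noteq> r \<and> p v = u} \<subseteq> {v. E u v}"
    using assms(1) by (auto simp: conn_lf_graph_def)
  then show ?thesis
    by (rule finite_subset) (use assms(1) True in \<open>simp add: conn_lf_graph_def\<close>)
next
  case False
  have "\<forall>v\<in>V. v \<noteq> r \<longrightarrow> p v \<in> V" using assms(2) by (auto simp: bfs_tree_def)
  then have "{v\<in>V. v \<noteq> r \<and> p v = u} = {}" using False by auto
  then show ?thesis by (metis finite.emptyI)
qed

lemma path_finite_children: "finite {v\<in>path_vertices m. v \<noteq> 0 \<and> path_parent v = u}"
  by (rule finite_subset[of _ "{Suc u}"]) (auto simp: path_parent_def)

theorem mainTheorem4:
  fixes \<alpha> \<beta> :: real and V :: "'v set" and E :: "'v \<Rightarrow> 'v \<Rightarrow> bool" and r :: 'v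
    and p :: "'v \<Rightarrow> 'v" and ord :: "'v \<Rightarrow> nat" and ordP :: "nat \<Rightarrow> nat"
    and m :: enat and w :: "nat \<Rightarrow> 'v" and t j j' :: nat
  assumes "0 \<le> \<alpha>" "\<alpha> \<le> 1" "0 \<le> \<beta>" "\<beta> \<le> 1"
    and "conn_lf_graph V E r"
    and "bfs_tree V E r p"
    and "inj_on ord V"
    and "inj_on ordP (path_vertices m)"
    and "w 0 = r"
    and "\<forall>i. 1 \<le> i \<and> enat i \<le> m \<longrightarrow> w i \<in> V \<and> w i \<noteq> r \<and> p (w i) = w (i - 1)"
    and "0 < t"
    and "j < j'" "enat j' \<le> m"
  shows "same_origin_prob \<alpha> \<beta> V r p ord t (w j) (w j') =
         same_origin_prob \<alpha> \<beta> (path_vertices m) 0 path_parent ordP t j j'"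
proof -
  have j: "enat j \<le> m" using assms(12,13) by (metis enat_ord_simps(1) less_imp_le order_trans)
  interpret tree: root_path \<alpha> \<beta> V r p ord m w
    using assms(7,9,10) bfs_tree_finite_children[OF assms(5,6)] by unfold_locales auto
  interpret path: root_path \<alpha> \<beta> "path_vertices m" 0 path_parent ordP m id
    using assms(8) path_finite_children by unfold_locales (auto simp: path_vertices_def path_parent_def)
  show ?thesis
    using tree.same_origin_prob_eq_view_chain[OF j assms(13)]
      path.same_origin_prob_eq_view_chain[OF j assms(13)] by simp
qed

end
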